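(* Let $\mathbb{C}=(\mathbf{C},0,\mathbf{D},\mathcal{R})$ be a reactive system with redex RPOs, let $O$ be a set of contextual barbs, and let $L$ be a set of labels (arrows of $\mathbf{C}$). If $L$ is $O$-capturing and every label in $L$ is stable under barbed saturated bisimilarity $\sim^{BS}$, then $\sim^{BS}$ coincides with $L$-bisimilarity $\sim^{L}$.
   Context: A reactive system consists of a category $\mathbf{C}$, a distinguished object $0$, a composition-reflecting subcategory $\mathbf{D}$ of reactive contexts, and a set $\mathcal{R}\subseteq\bigcup_I\mathbf{C}(0,I)\times\mathbf{C}(0,I)$ of reduction rules. Terms are arrows with domain $0$; $C[P]$ denotes $C[-]\circ P$. Reduction: $P\rightsquigarrow Q$ iff $P=d\circ l$, $Q=d\circ r$ for some $\langle l,r\rangle\in\mathcal{R}$, $d\in\mathbf{D}$. For a commuting square $c_1\circ a_1=c_2\circ a_2$ with $a_1:K\to I_2$, $a_2:K\to I_3$, $c_1:I_2\to I_4$, $c_2:I_3\to I_4$, a candidate is $\langle I_5,e,f,g\rangle$ with $e\circ a_1=f\circ a_2$, $g\circ e=c_1$, $g\circ f=c_2$; an RPO is a candidate through which every other candidate $\langle I_6,e',f',g'\rangle$ factors via a unique $h:I_5\to I_6$ ($h\circ e=e'$, $h\circ f=f'$, $g'\circ h=g$); the square is an IPO if $\langle I_4,c_1,c_2,\mathrm{id}\rangle$ is an RPO. A redex square is a commuting square $C[-]\circ P=d\circ l$ with $\langle l,r\rangle\in\mathcal{R}$, $d\in\mathbf{D}$; the system has redex RPOs if every redex square has an RPO.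 IPO transitions: $P\xrightarrow{C[-]}_I d\circ r$ if $d\in\mathbf{D}$, $\langle l,r\rangle\in\mathcal{R}$ and $C[-]\circ P=d\circ l$ is an IPO. $L$-bisimulation: a symmetric relation $\mathcal{R}'$ such that if $P\,\mathcal{R}'\,Q$ and $P\xrightarrow{C[-]}_I P'$ then, if $C[-]\in L$, $Q\xrightarrow{C[-]}_I Q'$ with $P'\,\mathcal{R}'\,Q'$, and otherwise $C[Q]\rightsquigarrow Q'$ with $P'\,\mathcal{R}'\,Q'$; $\sim^L$ is the largest one. Barbs are predicates on terms; $P\downarrow_o$ means $P$ satisfies $o\in O$. Barbed saturated bisimilarity $\sim^{BS}$ is the largest symmetric relation $\mathcal{R}'$ such that if $P\,\mathcal{R}'\,Q$ then for all arrows $C[-]$ composable with $P$: $C[P]\downarrow_o$ implies $C[Q]\downarrow_o$, and $C[P]\rightsquigarrow P'$ implies $C[Q]\rightsquigarrow Q'$ with $P'\,\mathcal{R}'\,Q'$. A barb $o$ is contextual if whenever ($P\downarrow_o$ implies $Q\downarrow_o$) then for all $C[-]$, $C[P]\downarrow_o$ implies $C[Q]\downarrow_o$. $L$ is $O$-capturing if for each $o\in O$ there is $C[-]\in L$ such that for every term $P$, $P\downarrow_o$ iff $P\xrightarrow{C[-]}_I P'$ for some $P'$. A binary predicate $\mathcal{P}(X,Y)$ on terms is stable under a relation $\mathcal{R}'$ if whenever $P\,\mathcal{R}'\,Q$ and $\mathcal{P}(P,P')$ there is $Q'$ with $\mathcal{P}(Q,Q')$ and $P'\,\mathcal{R}'\,Q'$;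 a label $C[-]$ is stable under $\mathcal{R}'$ if the predicate $X\xrightarrow{C[-]}_I Y$ is. *)

theory Defs
  imports Main
begin

text \<open>A category is given by a set of objects, a set of arrows, domain and codomain
maps, a composition operation (\<open>ccomp S g f\<close> is \<open>g \<circ> f\<close>, meaningful when
\<open>ccod S f = cdom S g\<close>), and identities.\<close>

record ('o, 'a) rsys =
  cobj  :: "'o set"
  carr  :: "'a set"
  cdom  :: "'a \<Rightarrow> 'o"
  ccod  :: "'a \<Rightarrow> 'o"
  ccomp :: "'a \<Rightarrow> 'a \<Rightarrow> 'a"
  cid   :: "'o \<Rightarrow> 'a"
  zero  :: "'o"
  rctx  :: "'a set"
  rules :: "('a \<times> 'a) set"

definition is_category :: "('o, 'a, 'x) rsys_scheme \<Rightarrow> bool" where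
  "is_category S \<longleftrightarrow>
     (\<forall>f\<in>carr S. cdom S f \<in> cobj S \<and> ccod S f \<in> cobj S) \<and>
     (\<forall>x\<in>cobj S. cid S x \<in> carr S \<and> cdom S (cid S x) = x \<and> ccod S (cid S x) = x) \<and>
     (\<forall>f\<in>carr S. \<forall>g\<in>carr S. ccod S f = cdom S g \<longrightarrow>
        ccomp S g f \<in> carr S \<and> cdom S (ccomp S g f) = cdom S f \<and> ccod S (ccomp S g f) = ccod S g) \<and>
     (\<forall>f\<in>carr S. \<forall>g\<in>carr S. \<forall>h\<in>carr S. ccod S f = cdom S g \<longrightarrow> ccod S g = cdom S h \<longrightarrow>
        ccomp S h (ccomp S g f) = ccomp S (ccomp S h g) f) \<and>
     (\<forall>f\<in>carr S. ccomp S (cid S (ccod S f)) f = f \<and> ccomp S f (cid S (cdom S f)) = f)"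

definition is_subcategory :: "('o, 'a, 'x) rsys_scheme \<Rightarrow> 'a set \<Rightarrow> bool" where
  "is_subcategory S D \<longleftrightarrow> D \<subseteq> carr S \<and>
     (\<forall>d\<in>D. cid S (cdom S d) \<in> D \<and> cid S (ccod S d) \<in> D) \<and>
     (\<forall>d\<in>D. \<forall>e\<in>D. ccod S d = cdom S e \<longrightarrow> ccomp S e d \<in> D)"

definition composition_reflecting :: "('o, 'a, 'x) rsys_scheme \<Rightarrow> 'a set \<Rightarrow> bool" where
  "composition_reflecting S D \<longleftrightarrow>
     (\<forall>d\<in>carr S. \<forall>e\<in>carr S. ccod S d = cdom S e \<longrightarrow> ccomp S e d \<in> D \<longrightarrow> d \<in> D \<and> e \<in> D)"

definition is_reactive_system :: "('o, 'a, 'x) rsys_scheme \<Rightarrow> bool" where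
  "is_reactive_system S \<longleftrightarrow> is_category S \<and> zero S \<in> cobj S \<and>
     is_subcategory S (rctx S) \<and> composition_reflecting S (rctx S) \<and>
     (\<forall>(l, r)\<in>rules S. l \<in> carr S \<and> r \<in> carr S \<and> cdom S l = zero S \<and> cdom S r = zero S
        \<and> ccod S l = ccod S r)"

definition "term" :: "('o, 'a, 'x) rsys_scheme \<Rightarrow> 'a \<Rightarrow> bool" where
  "term S P \<longleftrightarrow> P \<in> carr S \<and> cdom S P = zero S"

definition composable :: "('o, 'a, 'x) rsys_scheme \<Rightarrow> 'a \<Rightarrow> 'a \<Rightarrow> bool" where
  "composable S C P \<longleftrightarrow> C \<in> carr S \<and> cdom S C = ccod S P"

definition red :: "('o, 'a, 'x) rsys_scheme \<Rightarrow> 'a \<Rightarrow> 'a \<Rightarrow> bool" where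
  "red S P Q \<longleftrightarrow> (\<exists>l r d. (l, r) \<in> rules S \<and> d \<in> rctx S \<and> cdom S d = ccod S l \<and>
      P = ccomp S d l \<and> Q = ccomp S d r)"

definition comm_square :: "('o, 'a, 'x) rsys_scheme \<Rightarrow> 'a \<Rightarrow> 'a \<Rightarrow> 'a \<Rightarrow> 'a \<Rightarrow> bool" where
  "comm_square S a1 a2 c1 c2 \<longleftrightarrow>
     a1 \<in> carr S \<and> a2 \<in> carr S \<and> c1 \<in> carr S \<and> c2 \<in> carr S \<and>
     cdom S a1 = cdom S a2 \<and> ccod S a1 = cdom S c1 \<and> ccod S a2 = cdom S c2 \<and>
     ccod S c1 = ccod S c2 \<and> ccomp S c1 a1 = ccomp S c2 a2"

text \<open>Candidate \<open>\<langle>I5, e, f, g\<rangle>\<close> for the square; \<open>I5\<close> is \<open>ccod S e\<close>.\<close>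
definition candidate :: "('o, 'a, 'x) rsys_scheme \<Rightarrow> 'a \<Rightarrow> 'a \<Rightarrow> 'a \<Rightarrow> 'a \<Rightarrow> 'a \<Rightarrow> 'a \<Rightarrow> 'a \<Rightarrow> bool" where
  "candidate S a1 a2 c1 c2 e f g \<longleftrightarrow>
     e \<in> carr S \<and> f \<in> carr S \<and> g \<in> carr S \<and>
     cdom S e = ccod S a1 \<and> cdom S f = ccod S a2 \<and> ccod S e = ccod S f \<and>
     cdom S g = ccod S e \<and> ccod S g = ccod S c1 \<and>
     ccomp S e a1 = ccomp S f a2 \<and> ccomp S g e = c1 \<and> ccomp S g f = c2"

definition is_RPO :: "('o, 'a, 'x) rsys_scheme \<Rightarrow> 'a \<Rightarrow> 'a \<Rightarrow> 'a \<Rightarrow> 'a \<Rightarrow> 'a \<Rightarrow> 'a \<Rightarrow> 'a \<Rightarrow> bool" where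
  "is_RPO S a1 a2 c1 c2 e f g \<longleftrightarrow> candidate S a1 a2 c1 c2 e f g \<and>
     (\<forall>e' f' g'. candidate S a1 a2 c1 c2 e' f' g' \<longrightarrow>
        (\<exists>!h. h \<in> carr S \<and> cdom S h = ccod S e \<and> ccod S h = ccod S e' \<and>
              ccomp S h e = e' \<and> ccomp S h f = f' \<and> ccomp S g' h = g))"

definition is_IPO :: "('o, 'a, 'x) rsys_scheme \<Rightarrow> 'a \<Rightarrow> 'a \<Rightarrow> 'a \<Rightarrow> 'a \<Rightarrow> bool" where
  "is_IPO S a1 a2 c1 c2 \<longleftrightarrow> comm_square S a1 a2 c1 c2 \<and>
     is_RPO S a1 a2 c1 c2 c1 c2 (cid S (ccod S c1))"

definition redex_square :: "('o, 'a, 'x) rsys_scheme \<Rightarrow> 'a \<Rightarrow> 'a \<Rightarrow> 'a \<Rightarrow> 'a \<Rightarrow> bool" where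
  "redex_square S P C d l \<longleftrightarrow> comm_square S P l C d \<and>
     (\<exists>r. (l, r) \<in> rules S) \<and> d \<in> rctx S"

definition has_redex_RPOs :: "('o, 'a, 'x) rsys_scheme \<Rightarrow> bool" where
  "has_redex_RPOs S \<longleftrightarrow> (\<forall>P C d l. redex_square S P C d l \<longrightarrow>
     (\<exists>e f g. is_RPO S P l C d e f g))"

definition ipo_trans :: "('o, 'a, 'x) rsys_scheme \<Rightarrow> 'a \<Rightarrow> 'a \<Rightarrow> 'a \<Rightarrow> bool" where
  "ipo_trans S P C P' \<longleftrightarrow> (\<exists>l r d. d \<in> rctx S \<and> (l, r) \<in> rules S \<and>
      is_IPO S P l C d \<and> P' = ccomp S d r)"

definition term_rel :: "('o, 'a, 'x) rsys_scheme \<Rightarrow> ('a \<Rightarrow> 'a \<Rightarrow> bool) \<Rightarrow> bool" where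
  "term_rel S R \<longleftrightarrow> (\<forall>P Q. R P Q \<longrightarrow> term S P \<and> term S Q \<and> ccod S P = ccod S Q)"

definition L_bisimulation :: "('o, 'a, 'x) rsys_scheme \<Rightarrow> 'a set \<Rightarrow> ('a \<Rightarrow> 'a \<Rightarrow> bool) \<Rightarrow> bool" where
  "L_bisimulation S L R \<longleftrightarrow> term_rel S R \<and> symp R \<and>
     (\<forall>P Q C P'. R P Q \<longrightarrow> ipo_trans S P C P' \<longrightarrow>
        (if C \<in> L then (\<exists>Q'. ipo_trans S Q C Q' \<and> R P' Q')
         else (\<exists>Q'. red S (ccomp S C Q) Q' \<and> R P' Q')))"

definition L_bisimilar :: "('o, 'a, 'x) rsys_scheme \<Rightarrow> 'a set \<Rightarrow> 'a \<Rightarrow> 'a \<Rightarrow> bool" where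
  "L_bisimilar S L P Q \<longleftrightarrow> (\<exists>R. L_bisimulation S L R \<and> R P Q)"

definition BS_bisimulation :: "('o, 'a, 'x) rsys_scheme \<Rightarrow> 'b set \<Rightarrow> ('b \<Rightarrow> 'a \<Rightarrow> bool)
    \<Rightarrow> ('a \<Rightarrow> 'a \<Rightarrow> bool) \<Rightarrow> bool" where
  "BS_bisimulation S Obs barb R \<longleftrightarrow> term_rel S R \<and> symp R \<and>
     (\<forall>P Q C. R P Q \<longrightarrow> composable S C P \<longrightarrow>
        (\<forall>ob\<in>Obs. barb ob (ccomp S C P) \<longrightarrow> barb ob (ccomp S C Q)) \<and>
        (\<forall>P'. red S (ccomp S C P) P' \<longrightarrow> (\<exists>Q'. red S (ccomp S C Q) Q' \<and> R P' Q')))"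

definition BS_bisimilar :: "('o, 'a, 'x) rsys_scheme \<Rightarrow> 'b set \<Rightarrow> ('b \<Rightarrow> 'a \<Rightarrow> bool)
    \<Rightarrow> 'a \<Rightarrow> 'a \<Rightarrow> bool" where
  "BS_bisimilar S Obs barb P Q \<longleftrightarrow> (\<exists>R. BS_bisimulation S Obs barb R \<and> R P Q)"

definition contextual_barb :: "('o, 'a, 'x) rsys_scheme \<Rightarrow> ('b \<Rightarrow> 'a \<Rightarrow> bool) \<Rightarrow> 'b \<Rightarrow> bool" where
  "contextual_barb S barb ob \<longleftrightarrow>
     (\<forall>P Q. term S P \<longrightarrow> term S Q \<longrightarrow> ccod S P = ccod S Q \<longrightarrow>
        (barb ob P \<longrightarrow> barb ob Q) \<longrightarrow>
        (\<forall>C. composable S C P \<longrightarrow> barb ob (ccomp S C P) \<longrightarrow> barb ob (ccomp S C Q)))"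

definition O_capturing :: "('o, 'a, 'x) rsys_scheme \<Rightarrow> 'b set \<Rightarrow> ('b \<Rightarrow> 'a \<Rightarrow> bool) \<Rightarrow> 'a set \<Rightarrow> bool" where
  "O_capturing S Obs barb L \<longleftrightarrow>
     (\<forall>ob\<in>Obs. \<exists>C\<in>L. \<forall>P. term S P \<longrightarrow> (barb ob P \<longleftrightarrow> (\<exists>P'. ipo_trans S P C P')))"

definition stable_pred :: "('a \<Rightarrow> 'a \<Rightarrow> bool) \<Rightarrow> ('a \<Rightarrow> 'a \<Rightarrow> bool) \<Rightarrow> bool" where
  "stable_pred Pr R \<longleftrightarrow> (\<forall>P Q P'. R P Q \<longrightarrow> Pr P P' \<longrightarrow> (\<exists>Q'. Pr Q Q' \<and> R P' Q'))"

definition stable_label :: "('o, 'a, 'x) rsys_scheme \<Rightarrow> 'a \<Rightarrow> ('a \<Rightarrow> 'a \<Rightarrow> bool) \<Rightarrow> bool" where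
  "stable_label S C R \<longleftrightarrow> stable_pred (\<lambda>X Y. ipo_trans S X C Y) R"

end

theory Submission
  imports Defs
begin

text \<open>Since labels in \<open>L\<close> are stable under \<open>\<sim>\<^sup>B\<^sup>S\<close> and every IPO transition \<open>P \<midarrow>C\<rightarrow> P'\<close> is
  a reduction \<open>C[P] \<leadsto> P'\<close>, barbed saturated bisimilarity is an \<open>L\<close>-bisimulation. Conversely,
  the closure of \<open>\<sim>\<^sup>L\<close> under contexts is a barbed saturated bisimulation: a reduction
  \<open>C[P] \<leadsto> P'\<close> is a redex square, whose RPO splits \<open>C\<close> as \<open>g \<circ> e\<close> with \<open>g\<close> reactive and \<open>P \<midarrow>e\<rightarrow> P\<^sub>0\<close>
  an IPO transition with \<open>P' = g[P\<^sub>0]\<close>; the answer of \<open>Q\<close> to that transition, lifted by \<open>g\<close>,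
  answers \<open>C[P] \<leadsto> P'\<close>. Barbs are matched because an \<open>O\<close>-capturing label turns a barb of \<open>P\<close>
  into a transition, which \<open>Q\<close> must match, and contextuality transports the barb to \<open>C[-]\<close>.\<close>

lemma category_comp_closed:
  assumes "is_category S" "f \<in> carr S" "g \<in> carr S" "ccod S f = cdom S g"
  shows "ccomp S g f \<in> carr S" "cdom S (ccomp S g f) = cdom S f" "ccod S (ccomp S g f) = ccod S g"
  using assms unfolding is_category_def by blast+

lemma category_comp_assoc:
  assumes "is_category S" "f \<in> carr S" "g \<in> carr S" "h \<in> carr S"
    "ccod S f = cdom S g" "ccod S g = cdom S h"
  shows "ccomp S h (ccomp S g f) = ccomp S (ccomp S h g) f"
  using assms unfolding is_category_def by blast

lemma category_id_closed:
  assumes "is_category S" "f \<in> carr S"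
  shows "cid S (ccod S f) \<in> carr S" "cdom S (cid S (ccod S f)) = ccod S f"
    "ccod S (cid S (ccod S f)) = ccod S f"
  using assms unfolding is_category_def by simp_all

lemma category_comp_id:
  assumes "is_category S" "f \<in> carr S"
  shows "ccomp S (cid S (ccod S f)) f = f" "ccomp S f (cid S (cdom S f)) = f"
  using assms unfolding is_category_def by simp_all

lemma reactive_system_category: "is_reactive_system S \<Longrightarrow> is_category S"
  unfolding is_reactive_system_def by blast

lemma reactive_system_rctx_carr: "is_reactive_system S \<Longrightarrow> d \<in> rctx S \<Longrightarrow> d \<in> carr S"
  unfolding is_reactive_system_def is_subcategory_def by blast

lemma reactive_system_rctx_comp:
  "is_reactive_system S \<Longrightarrow> d \<in> rctx S \<Longrightarrow> e \<in> rctx S \<Longrightarrow> ccod S d = cdom S e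
    \<Longrightarrow> ccomp S e d \<in> rctx S"
  unfolding is_reactive_system_def is_subcategory_def by blast

lemma reactive_system_rctx_reflect:
  "is_reactive_system S \<Longrightarrow> d \<in> carr S \<Longrightarrow> e \<in> carr S \<Longrightarrow> ccod S d = cdom S e
    \<Longrightarrow> ccomp S e d \<in> rctx S \<Longrightarrow> d \<in> rctx S \<and> e \<in> rctx S"
  unfolding is_reactive_system_def composition_reflecting_def by blast

lemma reactive_system_rule:
  assumes "is_reactive_system S" "(l, r) \<in> rules S"
  shows "l \<in> carr S" "r \<in> carr S" "cdom S l = zero S" "ccod S l = ccod S r"
  using assms unfolding is_reactive_system_def by auto

lemma candidate_comp_mediator:
  assumes cat: "is_category S"
    and c: "candidate S a1 a2 c1 c2 e f g" and c': "candidate S a1 a2 e f e' f' g'"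
  shows "candidate S a1 a2 c1 c2 e' f' (ccomp S g g')"
  using c c' category_comp_closed[OF cat, of g' g]
    category_comp_assoc[OF cat, of e' g' g] category_comp_assoc[OF cat, of f' g' g]
  unfolding candidate_def by auto

lemma RPO_self_mediator_eq_id:
  assumes cat: "is_category S" and rpo: "is_RPO S a1 a2 c1 c2 e f g"
    and k: "k \<in> carr S" "cdom S k = ccod S e" "ccod S k = ccod S e"
      "ccomp S k e = e" "ccomp S k f = f" "ccomp S g k = g"
  shows "k = cid S (ccod S e)"
proof -
  have c: "candidate S a1 a2 c1 c2 e f g" using rpo unfolding is_RPO_def by blast
  then have "\<exists>!h. h \<in> carr S \<and> cdom S h = ccod S e \<and> ccod S h = ccod S e \<and>
      ccomp S h e = e \<and> ccomp S h f = f \<and> ccomp S g h = g"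
    using rpo unfolding is_RPO_def by blast
  moreover have "ccomp S (cid S (ccod S e)) f = f" "ccomp S g (cid S (ccod S e)) = g"
    using c category_comp_id[OF cat] unfolding candidate_def by metis+
  ultimately show ?thesis
    using k c category_id_closed[OF cat, of e] category_comp_id[OF cat, of e]
    unfolding candidate_def by blast
qed

lemma RPO_imp_IPO:
  assumes cat: "is_category S" and sq: "comm_square S a1 a2 c1 c2"
    and rpo: "is_RPO S a1 a2 c1 c2 e f g"
  shows "is_IPO S a1 a2 e f"
proof -
  let ?i = "cid S (ccod S e)"
  have c: "candidate S a1 a2 c1 c2 e f g" using rpo unfolding is_RPO_def by blast
  have i: "?i \<in> carr S" "cdom S ?i = ccod S e" "ccod S ?i = ccod S e"
    "ccomp S ?i e = e" "ccomp S ?i f = f"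
    using c category_id_closed[OF cat] category_comp_id[OF cat] unfolding candidate_def by metis+
  have square: "comm_square S a1 a2 e f" and self: "candidate S a1 a2 e f e f ?i"
    using sq c i unfolding comm_square_def candidate_def by auto
  have "\<exists>!h. h \<in> carr S \<and> cdom S h = ccod S e \<and> ccod S h = ccod S e' \<and>
      ccomp S h e = e' \<and> ccomp S h f = f' \<and> ccomp S g' h = ?i"
    if c': "candidate S a1 a2 e f e' f' g'" for e' f' g'
  proof -
    have gg': "candidate S a1 a2 c1 c2 e' f' (ccomp S g g')"
      using candidate_comp_mediator[OF cat c c'] .
    then obtain h where h: "h \<in> carr S" "cdom S h = ccod S e" "ccod S h = ccod S e'"
        "ccomp S h e = e'" "ccomp S h f = f'" "ccomp S (ccomp S g g') h = g"
      and h_unique: "\<And>h2. h2 \<in> carr S \<and> cdom S h2 = ccod S e \<and> ccod S h2 = ccod S e' \<and>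
        ccomp S h2 e = e' \<and> ccomp S h2 f = f' \<and> ccomp S (ccomp S g g') h2 = g \<Longrightarrow> h2 = h"
      using rpo unfolding is_RPO_def by metis
    have assoc: "ccomp S (ccomp S g g') h2 = ccomp S g (ccomp S g' h2)"
      if "h2 \<in> carr S" "ccod S h2 = ccod S e'" for h2
      using that c c' category_comp_assoc[OF cat, of h2 g' g] unfolding candidate_def by auto
    have "ccomp S g' h = ?i"
    proof (rule RPO_self_mediator_eq_id[OF cat rpo])
      show "ccomp S g' h \<in> carr S" "cdom S (ccomp S g' h) = ccod S e"
        "ccod S (ccomp S g' h) = ccod S e"
        using h c' category_comp_closed[OF cat, of h g'] unfolding candidate_def by auto
      show "ccomp S (ccomp S g' h) e = e" "ccomp S (ccomp S g' h) f = f"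
        using h c c' category_comp_assoc[OF cat, of e h g'] category_comp_assoc[OF cat, of f h g']
        unfolding candidate_def by auto
      show "ccomp S g (ccomp S g' h) = g" using h assoc by simp
    qed
    moreover have "h2 = h" if "h2 \<in> carr S \<and> cdom S h2 = ccod S e \<and> ccod S h2 = ccod S e' \<and>
        ccomp S h2 e = e' \<and> ccomp S h2 f = f' \<and> ccomp S g' h2 = ?i" for h2
      using that assoc h_unique c category_comp_id[OF cat, of g] unfolding candidate_def by metis
    ultimately show ?thesis using h by blast
  qed
  then show ?thesis
    using square self unfolding is_IPO_def is_RPO_def candidate_def by auto
qed

lemma ipo_trans_imp_red:
  assumes "ipo_trans S P C P'"
  shows "composable S C P" "red S (ccomp S C P) P'"
  using assms unfolding ipo_trans_def is_IPO_def comm_square_def composable_def red_def by metis+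

lemma red_in_reactive_context:
  assumes rs: "is_reactive_system S" and r: "red S (ccomp S e Q) Q'"
    and g: "g \<in> rctx S" "cdom S g = ccod S e"
    and e: "e \<in> carr S" "Q \<in> carr S" "ccod S Q = cdom S e"
  shows "red S (ccomp S (ccomp S g e) Q) (ccomp S g Q')"
proof -
  note cat = reactive_system_category[OF rs]
  from r obtain l r' d where d: "(l, r') \<in> rules S" "d \<in> rctx S" "cdom S d = ccod S l"
    "ccomp S e Q = ccomp S d l" "Q' = ccomp S d r'" unfolding red_def by blast
  note lr = reactive_system_rule[OF rs d(1)]
  have dg: "d \<in> carr S" "g \<in> carr S" using d(2) g(1) reactive_system_rctx_carr[OF rs] by auto
  have "ccod S d = ccod S e"
    using category_comp_closed(3)[OF cat lr(1) dg(1)] category_comp_closed(3)[OF cat e(2) e(1)] d e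
    by metis
  with g have dg_comp: "ccod S d = cdom S g" by simp
  have "ccomp S (ccomp S g e) Q = ccomp S g (ccomp S d l)"
    using category_comp_assoc[OF cat e(2) e(1) dg(2)] e g d by simp
  also have "\<dots> = ccomp S (ccomp S g d) l"
    using category_comp_assoc[OF cat lr(1) dg] d dg_comp by simp
  finally have "ccomp S (ccomp S g e) Q = ccomp S (ccomp S g d) l" .
  moreover have "ccomp S g Q' = ccomp S (ccomp S g d) r'"
    using category_comp_assoc[OF cat lr(2) dg] d lr dg_comp by simp
  moreover have "cdom S (ccomp S g d) = ccod S l"
    using category_comp_closed(2)[OF cat dg dg_comp] d by simp
  ultimately show ?thesis
    unfolding red_def using reactive_system_rctx_comp[OF rs d(2) g(1) dg_comp] d(1) by blast
qed

lemma red_factors_through_ipo_trans: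
  assumes rs: "is_reactive_system S" and rpos: "has_redex_RPOs S"
    and P: "term S P" and C: "composable S C P" and rd: "red S (ccomp S C P) P'"
  obtains e g P\<^sub>0 where "ipo_trans S P e P\<^sub>0" "g \<in> rctx S" "cdom S g = ccod S e"
    "C = ccomp S g e" "P' = ccomp S g P\<^sub>0" "e \<in> carr S" "ccod S P\<^sub>0 = ccod S e"
proof -
  note cat = reactive_system_category[OF rs]
  from rd obtain l r d where d: "(l, r) \<in> rules S" "d \<in> rctx S" "cdom S d = ccod S l"
    "ccomp S C P = ccomp S d l" "P' = ccomp S d r" unfolding red_def by blast
  note lr = reactive_system_rule[OF rs d(1)]
  have dc: "d \<in> carr S" using reactive_system_rctx_carr[OF rs d(2)] .
  have "ccod S C = ccod S d"
    using category_comp_closed(3)[OF cat lr(1) dc] category_comp_closed(3)[OF cat, of P C] d C P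
    unfolding composable_def term_def by metis
  then have sq: "comm_square S P l C d"
    using P C lr dc d unfolding comm_square_def composable_def term_def by auto
  then obtain e f g where rpo: "is_RPO S P l C d e f g"
    using rpos d unfolding has_redex_RPOs_def redex_square_def by blast
  then have c: "e \<in> carr S" "f \<in> carr S" "g \<in> carr S" "cdom S f = ccod S l"
    "ccod S e = ccod S f" "cdom S g = ccod S e" "ccomp S g e = C" "ccomp S g f = d"
    unfolding is_RPO_def candidate_def by auto
  have fg: "f \<in> rctx S" "g \<in> rctx S"
    using reactive_system_rctx_reflect[OF rs c(2) c(3)] c d by auto
  show ?thesis
  proof
    show "ipo_trans S P e (ccomp S f r)"
      unfolding ipo_trans_def using fg d RPO_imp_IPO[OF cat sq rpo] by blast
    show "P' = ccomp S g (ccomp S f r)"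
      using category_comp_assoc[OF cat lr(2) c(2) c(3)] lr c d by simp
    show "ccod S (ccomp S f r) = ccod S e"
      using category_comp_closed(3)[OF cat lr(2) c(2)] lr c by simp
  qed (use fg c in auto)
qed

lemma L_bisimulation_red_simulation:
  assumes "L_bisimulation S L R" "R P Q" "ipo_trans S P C P'"
  obtains Q' where "red S (ccomp S C Q) Q'" "R P' Q'"
proof -
  have "if C \<in> L then (\<exists>Q'. ipo_trans S Q C Q' \<and> R P' Q')
      else (\<exists>Q'. red S (ccomp S C Q) Q' \<and> R P' Q')"
    using assms unfolding L_bisimulation_def by blast
  then show thesis using that ipo_trans_imp_red(2) by (metis (full_types))
qed

lemma BS_bisimilar_symp: "symp (BS_bisimilar S Obs barb)"
proof (rule sympI)
  fix P Q assume "BS_bisimilar S Obs barb P Q"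
  then obtain R where R: "BS_bisimulation S Obs barb R" "R P Q" unfolding BS_bisimilar_def by blast
  then have "R Q P" unfolding BS_bisimulation_def by (blast dest: sympD)
  with R(1) show "BS_bisimilar S Obs barb Q P" unfolding BS_bisimilar_def by blast
qed

lemma L_bisimilar_symp: "symp (L_bisimilar S L)"
proof (rule sympI)
  fix P Q assume "L_bisimilar S L P Q"
  then obtain R where R: "L_bisimulation S L R" "R P Q" unfolding L_bisimilar_def by blast
  then have "R Q P" unfolding L_bisimulation_def by (blast dest: sympD)
  with R(1) show "L_bisimilar S L Q P" unfolding L_bisimilar_def by blast
qed

lemma L_bisimilar_L_bisimulation: "L_bisimulation S L (L_bisimilar S L)"
proof -
  have "term_rel S (L_bisimilar S L)"
    unfolding L_bisimilar_def L_bisimulation_def term_rel_def by blast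
  moreover have "if C \<in> L then (\<exists>Q'. ipo_trans S Q C Q' \<and> L_bisimilar S L P' Q')
      else (\<exists>Q'. red S (ccomp S C Q) Q' \<and> L_bisimilar S L P' Q')"
    if "L_bisimilar S L P Q" "ipo_trans S P C P'" for P Q C P'
  proof -
    from that obtain R where R: "L_bisimulation S L R" "R P Q" unfolding L_bisimilar_def by blast
    with that(2) have "if C \<in> L then (\<exists>Q'. ipo_trans S Q C Q' \<and> R P' Q')
        else (\<exists>Q'. red S (ccomp S C Q) Q' \<and> R P' Q')"
      unfolding L_bisimulation_def by blast
    with R(1) show ?thesis unfolding L_bisimilar_def by (auto split: if_splits)
  qed
  ultimately show ?thesis unfolding L_bisimulation_def using L_bisimilar_symp by blast
qed

lemma BS_bisimilar_L_bisimulation: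
  assumes stable: "\<forall>C\<in>L. stable_label S C (BS_bisimilar S Obs barb)"
  shows "L_bisimulation S L (BS_bisimilar S Obs barb)"
proof -
  have "term_rel S (BS_bisimilar S Obs barb)"
    unfolding term_rel_def BS_bisimilar_def BS_bisimulation_def by blast
  moreover have "if C \<in> L then (\<exists>Q'. ipo_trans S Q C Q' \<and> BS_bisimilar S Obs barb P' Q')
      else (\<exists>Q'. red S (ccomp S C Q) Q' \<and> BS_bisimilar S Obs barb P' Q')"
    if PQ: "BS_bisimilar S Obs barb P Q" and t: "ipo_trans S P C P'" for P Q C P'
  proof (cases "C \<in> L")
    case True
    then show ?thesis using stable PQ t unfolding stable_label_def stable_pred_def by auto
  next
    case False
    from PQ obtain R where "BS_bisimulation S Obs barb R" "R P Q" unfolding BS_bisimilar_def by blast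
    with ipo_trans_imp_red[OF t] obtain Q' where "red S (ccomp S C Q) Q'" "R P' Q'"
      unfolding BS_bisimulation_def by blast
    with False \<open>BS_bisimulation S Obs barb R\<close> show ?thesis unfolding BS_bisimilar_def by auto
  qed
  ultimately show ?thesis unfolding L_bisimulation_def using BS_bisimilar_symp by blast
qed

definition ctx_closure :: "('o, 'a, 'x) rsys_scheme \<Rightarrow> ('a \<Rightarrow> 'a \<Rightarrow> bool) \<Rightarrow> 'a \<Rightarrow> 'a \<Rightarrow> bool" where
  "ctx_closure S R X Y \<longleftrightarrow> (\<exists>P Q g. R P Q \<and> g \<in> carr S \<and> cdom S g = ccod S P \<and>
     X = ccomp S g P \<and> Y = ccomp S g Q)"

lemma ctx_closure_comp:
  assumes cat: "is_category S" and R: "term_rel S R"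
    and XY: "ctx_closure S R X Y" and C: "composable S C X"
  obtains P Q C' where "R P Q" "composable S C' P" "ccomp S C X = ccomp S C' P"
    "ccomp S C Y = ccomp S C' Q"
proof -
  from XY obtain P Q g where h: "R P Q" "g \<in> carr S" "cdom S g = ccod S P"
    "X = ccomp S g P" "Y = ccomp S g Q" unfolding ctx_closure_def by blast
  with R have PQ: "P \<in> carr S" "Q \<in> carr S" "ccod S Q = cdom S g"
    unfolding term_rel_def term_def by auto
  have C': "C \<in> carr S" "ccod S g = cdom S C"
    using C h category_comp_closed(3)[OF cat PQ(1) h(2)] unfolding composable_def by auto
  show thesis
  proof (rule that[of P Q "ccomp S C g"])
    show "R P Q" by (fact h(1))
    show "composable S (ccomp S C g) P"
      using category_comp_closed(1,2)[OF cat h(2) C'] h(3) unfolding composable_def by simp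
    show "ccomp S C X = ccomp S (ccomp S C g) P" "ccomp S C Y = ccomp S (ccomp S C g) Q"
      using category_comp_assoc[OF cat PQ(1) h(2) C'(1)] category_comp_assoc[OF cat PQ(2) h(2) C'(1)]
        h PQ C' by simp_all
  qed
qed

lemma ctx_closure_term_rel:
  assumes cat: "is_category S" and R: "term_rel S R"
  shows "term_rel S (ctx_closure S R)"
  unfolding term_rel_def
proof (intro allI impI)
  fix X Y assume "ctx_closure S R X Y"
  then obtain P Q g where h: "R P Q" "g \<in> carr S" "cdom S g = ccod S P"
    "X = ccomp S g P" "Y = ccomp S g Q" unfolding ctx_closure_def by blast
  with R have "P \<in> carr S" "Q \<in> carr S" "cdom S P = zero S" "cdom S Q = zero S"
    "ccod S Q = cdom S g" unfolding term_rel_def term_def by auto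
  with h show "term S X \<and> term S Y \<and> ccod S X = ccod S Y"
    using category_comp_closed[OF cat _ h(2)] unfolding term_def by simp
qed

lemma ctx_closure_symp:
  assumes "symp R" "term_rel S R"
  shows "symp (ctx_closure S R)"
proof (rule sympI)
  fix X Y assume "ctx_closure S R X Y"
  then obtain P Q g where h: "R P Q" "g \<in> carr S" "cdom S g = ccod S P"
    "X = ccomp S g P" "Y = ccomp S g Q" unfolding ctx_closure_def by blast
  moreover have "R Q P" "ccod S P = ccod S Q"
    using assms h(1) unfolding term_rel_def by (auto dest: sympD)
  ultimately show "ctx_closure S R Y X" unfolding ctx_closure_def by auto
qed

lemma ctx_closure_refl:
  assumes cat: "is_category S" and "term_rel S R" "R P Q"
  shows "ctx_closure S R P Q"
proof -
  have PQ: "P \<in> carr S" "Q \<in> carr S" "ccod S P = ccod S Q"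
    using assms unfolding term_rel_def term_def by auto
  show ?thesis
    unfolding ctx_closure_def
    using \<open>R P Q\<close> category_id_closed(1,2)[OF cat PQ(1)] category_comp_id(1)[OF cat PQ(1)]
      category_comp_id(1)[OF cat PQ(2)] PQ(3) by metis
qed

lemma L_bisimilar_barb:
  assumes cap: "O_capturing S Obs barb L" and ob: "ob \<in> Obs"
    and PQ: "L_bisimilar S L P Q" and "barb ob P"
  shows "barb ob Q"
proof -
  from cap ob obtain C where C: "C \<in> L"
    "\<And>P. term S P \<Longrightarrow> barb ob P \<longleftrightarrow> (\<exists>P'. ipo_trans S P C P')"
    unfolding O_capturing_def by blast
  have "term S P" "term S Q"
    using PQ L_bisimilar_L_bisimulation[of S L] unfolding L_bisimulation_def term_rel_def by blast+
  then obtain P' where "ipo_trans S P C P'" using C \<open>barb ob P\<close> by blast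
  with PQ C(1) L_bisimilar_L_bisimulation obtain Q' where "ipo_trans S Q C Q'"
    unfolding L_bisimulation_def by fastforce
  then show ?thesis using C(2)[OF \<open>term S Q\<close>] by blast
qed

lemma ctx_closure_L_bisimilar_BS_bisimulation:
  assumes rs: "is_reactive_system S" and rpos: "has_redex_RPOs S"
    and ctx: "\<forall>ob\<in>Obs. contextual_barb S barb ob"
    and cap: "O_capturing S Obs barb L"
  shows "BS_bisimulation S Obs barb (ctx_closure S (L_bisimilar S L))"
proof -
  note cat = reactive_system_category[OF rs]
  have tr: "term_rel S (L_bisimilar S L)" and sy: "symp (L_bisimilar S L)"
    using L_bisimilar_L_bisimulation unfolding L_bisimulation_def by blast+
  have "(\<forall>ob\<in>Obs. barb ob (ccomp S C X) \<longrightarrow> barb ob (ccomp S C Y)) \<and>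
      (\<forall>X'. red S (ccomp S C X) X' \<longrightarrow>
        (\<exists>Y'. red S (ccomp S C Y) Y' \<and> ctx_closure S (L_bisimilar S L) X' Y'))"
    if XY: "ctx_closure S (L_bisimilar S L) X Y" and C: "composable S C X" for X Y C
  proof -
    obtain P Q C' where PQ: "L_bisimilar S L P Q" and C': "composable S C' P"
      and eqs: "ccomp S C X = ccomp S C' P" "ccomp S C Y = ccomp S C' Q"
      using ctx_closure_comp[OF cat tr XY C] .
    have terms: "term S P" "term S Q" "ccod S P = ccod S Q" using tr PQ unfolding term_rel_def by auto
    have "barb ob (ccomp S C' Q)" if "ob \<in> Obs" "barb ob (ccomp S C' P)" for ob
      using that ctx L_bisimilar_barb[OF cap _ PQ] C' terms unfolding contextual_barb_def by blast
    moreover have "\<exists>Y'. red S (ccomp S C' Q) Y' \<and> ctx_closure S (L_bisimilar S L) X' Y'"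
      if red: "red S (ccomp S C' P) X'" for X'
    proof -
      obtain e g P\<^sub>0 where t: "ipo_trans S P e P\<^sub>0" and g: "g \<in> rctx S" "cdom S g = ccod S e"
        and C'_eq: "C' = ccomp S g e" and X': "X' = ccomp S g P\<^sub>0"
        and e: "e \<in> carr S" "ccod S P\<^sub>0 = ccod S e"
        using red_factors_through_ipo_trans[OF rs rpos terms(1) C' red] .
      obtain Q\<^sub>0 where Q\<^sub>0: "red S (ccomp S e Q) Q\<^sub>0" "L_bisimilar S L P\<^sub>0 Q\<^sub>0"
        using L_bisimulation_red_simulation[OF L_bisimilar_L_bisimulation PQ t] .
      have "composable S e P" using ipo_trans_imp_red(1)[OF t] .
      then have "red S (ccomp S C' Q) (ccomp S g Q\<^sub>0)"
        using red_in_reactive_context[OF rs Q\<^sub>0(1) g e(1)] terms C'_eq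
        unfolding term_def composable_def by simp
      moreover have "ctx_closure S (L_bisimilar S L) X' (ccomp S g Q\<^sub>0)"
        using Q\<^sub>0(2) X' g e reactive_system_rctx_carr[OF rs]
        unfolding ctx_closure_def by metis
      ultimately show ?thesis by blast
    qed
    ultimately show ?thesis using eqs by auto
  qed
  then show ?thesis
    unfolding BS_bisimulation_def
    using ctx_closure_term_rel[OF cat tr] ctx_closure_symp[OF sy tr] by blast
qed

theorem mainTheorem2:
  fixes S :: "('o, 'a) rsys" and Obs :: "'b set" and barb :: "'b \<Rightarrow> 'a \<Rightarrow> bool" and L :: "'a set"
  assumes "is_reactive_system S"
    and "has_redex_RPOs S"
    and "\<forall>ob\<in>Obs. contextual_barb S barb ob"
    and "L \<subseteq> carr S"
    and "O_capturing S Obs barb L"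
    and "\<forall>C\<in>L. stable_label S C (BS_bisimilar S Obs barb)"
  shows "BS_bisimilar S Obs barb = L_bisimilar S L"
proof (intro ext iffI)
  fix P Q
  assume "BS_bisimilar S Obs barb P Q"
  with BS_bisimilar_L_bisimulation[OF assms(6)] show "L_bisimilar S L P Q"
    unfolding L_bisimilar_def by blast
next
  fix P Q
  assume "L_bisimilar S L P Q"
  then have "ctx_closure S (L_bisimilar S L) P Q"
    using ctx_closure_refl[OF reactive_system_category[OF assms(1)]] L_bisimilar_L_bisimulation
    unfolding L_bisimulation_def by blast
  with ctx_closure_L_bisimilar_BS_bisimulation[OF assms(1,2,3,5)] show "BS_bisimilar S Obs barb P Q"
    unfolding BS_bisimilar_def by blast
qed

end
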